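(* Let $s\in\mathbb{C}$ with $\mathrm{Re}(s)>0$ and set $J^\infty(s):=\int_n^\infty z^{3-2s}\,\mathrm{Tr}(\Delta_n+z^2)^{-2}\,dz$. Then, as $n\to\infty$, for every $N\in\mathbb{N}$ $$J^\infty(s)=a_\infty(s)\,n^{2-2s}+O(n^{-N}),\qquad a_\infty(s)=\int_1^\infty z^{3-2s}\int_0^1\!\!\int_0^1\Big(\frac{\sin^2(\pi x)}{\pi^2}+\frac{\sin^2(\pi y)}{\pi^2}+z^2\Big)^{-2}dx\,dy\,dz.$$
   Context: $\Delta_n$ is the $5$-point star Laplacian on $(\mathbb{Z}/n\mathbb{Z})^2$, $\Delta_n u(k)=\frac{n^2}{4\pi^2}(4u(k_1,k_2)-u(k_1\pm1,k_2)-u(k_1,k_2\pm1))$, with eigenvalues $\frac{n^2}{\pi^2}(\sin^2(\frac{\pi k_1}{n})+\sin^2(\frac{\pi k_2}{n}))$, $k_1,k_2\in\{0,\dots,n-1\}$; so $\mathrm{Tr}(\Delta_n+z^2)^{-2}=\sum_{k_1,k_2=0}^{n-1}\big(\frac{n^2}{\pi^2}\sin^2(\frac{\pi k_1}{n})+\frac{n^2}{\pi^2}\sin^2(\frac{\pi k_2}{n})+z^2\big)^{-2}$. *)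

theory Defs
  imports "HOL-Analysis.Analysis" "HOL-Library.Landau_Symbols"
begin

text \<open>Eigenvalue of the 5-point star Laplacian on the discrete torus (Z/nZ)^2
  indexed by (k1,k2), k1,k2 in {0..n-1}.\<close>
definition lap_eigenvalue :: "nat \<Rightarrow> nat \<Rightarrow> nat \<Rightarrow> real" where
  "lap_eigenvalue n k1 k2 =
     (real n)\<^sup>2 / pi\<^sup>2 * (sin (pi * real k1 / real n))\<^sup>2
   + (real n)\<^sup>2 / pi\<^sup>2 * (sin (pi * real k2 / real n))\<^sup>2"

text \<open>Tr (Delta_n + z^2)^(-2), as the sum over the spectrum.\<close>
definition tr_res_sq :: "nat \<Rightarrow> real \<Rightarrow> real" where
  "tr_res_sq n z = (\<Sum>k1<n. \<Sum>k2<n. 1 / (lap_eigenvalue n k1 k2 + z\<^sup>2)\<^sup>2)"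

definition J_inf :: "nat \<Rightarrow> complex \<Rightarrow> complex" where
  "J_inf n s = integral {real n..}
     (\<lambda>z. complex_of_real z powr (3 - 2 * s) * complex_of_real (tr_res_sq n z))"

definition a_inf :: "complex \<Rightarrow> complex" where
  "a_inf s = integral {1..}
     (\<lambda>z. complex_of_real z powr (3 - 2 * s) * complex_of_real
        (integral {0..1} (\<lambda>x. integral {0..1} (\<lambda>y.
           1 / ((sin (pi * x))\<^sup>2 / pi\<^sup>2 + (sin (pi * y))\<^sup>2 / pi\<^sup>2 + z\<^sup>2)\<^sup>2))))"

end

theory Submission
  imports Defs "HOL-Real_Asymp.Real_Asymp"
begin

text \<open>
  Substituting z = n t turns Tr (Delta_n + z^2)^-2 into n^-4 times the sum of
  F_t(x, y) = (w(x, y) + t^2)^-2, where w(x, y) = sin^2(pi x)/pi^2 + sin^2(pi y)/pi^2 <= 1/4,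
  over the grid points (k1/n, k2/n).  Hence J_inf(s) - a_inf(s) n^(2-2s) is n^(-2s) times the
  integral over t >= 1 of t^(3-2s) against the quadrature error of the n x n rectangle rule
  for F_t on the unit square.  For t >= 1 the Taylor polynomial of F_t in w of degree < n is
  uniformly within (2n+1) 4^-n t^-4 of F_t, and it is a trigonometric polynomial with
  frequencies < n in each variable, for which the rectangle rule is exact.  So the quadrature
  error is O(n^3 4^-n t^-4), and integrating it against |t^(3-2s)| = t^(3 - 2 Re s) leaves
  O(n^3 4^-n) = O(n^-N).
\<close>

section \<open>Exactness of the rectangle rule for trigonometric polynomials\<close>

lemma sum_cos_2pi_int_grid:
  fixes p :: int
  assumes "\<bar>p\<bar> < int n"
  shows "(\<Sum>k<n. cos (2 * pi * of_int p * (real k / real n))) = (if p = 0 then real n else 0)"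
proof (cases "p = 0")
  case False
  have n0: "n > 0" using assms by linarith
  define w where "w = cis (2 * pi * of_int p / real n)"
  have powers: "cis (2 * pi * of_int p * (real k / real n)) = w ^ k" for k
    unfolding w_def Complex.DeMoivre by (simp add: field_simps)
  have "w \<noteq> 1"
  proof
    assume "w = 1"
    then have "cos (2 * pi * of_int p / real n) = 1"
      unfolding w_def by (metis cis.sel(1) one_complex.sel(1))
    then obtain q :: int where "2 * pi * of_int p / real n = of_int q * 2 * pi"
      by (auto simp: cos_one_2pi_int)
    then have "p = q * int n"
      using n0 by (simp add: field_simps) (metis of_int_eq_iff of_int_mult of_int_of_nat_eq)
    with False assms show False
      by (cases "q = 0") (auto simp: abs_mult)
  qed
  moreover have "w ^ n = 1"
    using n0 unfolding w_def Complex.DeMoivre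
    by (simp add: field_simps) (metis cis_multiple_2pi Ints_of_int mult.commute mult.left_commute)
  ultimately have "(\<Sum>k<n. cis (2 * pi * of_int p * (real k / real n))) = 0"
    using geometric_sum[of w n] by (simp only: powers) simp
  then have "Re (\<Sum>k<n. cis (2 * pi * of_int p * (real k / real n))) = 0"
    by simp
  with False show ?thesis
    by (simp only: Re_sum cis.sel) simp
qed simp

lemma integral_cos_2pi_int:
  fixes p :: int
  shows "integral {0..1} (\<lambda>x. cos (2 * pi * of_int p * x)) = (if p = 0 then 1 else 0)"
proof (cases "p = 0")
  case False
  then have "((\<lambda>x. cos (2 * pi * of_int p * x)) has_integral
      sin (2 * pi * of_int p * 1) / (2 * pi * of_int p)
      - sin (2 * pi * of_int p * 0) / (2 * pi * of_int p)) {0..1}"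
    by (intro fundamental_theorem_of_calculus)
       (auto intro!: derivative_eq_intros simp flip: has_real_derivative_iff_has_vector_derivative)
  with False show ?thesis
    by (simp add: integral_unique)
qed simp

lemma riemann_sum_cos_poly:
  fixes q :: "'a \<Rightarrow> int"
  assumes "finite M" "\<And>m. m \<in> M \<Longrightarrow> \<bar>q m\<bar> < int n"
  shows "(\<Sum>k<n. \<Sum>m\<in>M. c m * cos (2 * pi * of_int (q m) * (real k / real n)))
       = real n * integral {0..1} (\<lambda>x. \<Sum>m\<in>M. c m * cos (2 * pi * of_int (q m) * x))"
proof -
  have "(\<Sum>k<n. \<Sum>m\<in>M. c m * cos (2 * pi * of_int (q m) * (real k / real n)))
      = (\<Sum>m\<in>M. c m * (\<Sum>k<n. cos (2 * pi * of_int (q m) * (real k / real n))))"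
    by (subst sum.swap) (simp only: sum_distrib_left)
  also have "\<dots> = (\<Sum>m\<in>M. c m * (if q m = 0 then real n else 0))"
    using assms(2) by (intro sum.cong refl) (simp only: sum_cos_2pi_int_grid)
  also have "\<dots> = real n * (\<Sum>m\<in>M. c m * (if q m = 0 then 1 else 0))"
    by (simp add: sum_distrib_left) (intro sum.cong refl, simp)
  also have "(\<Sum>m\<in>M. c m * (if q m = 0 then 1 else 0))
      = integral {0..1} (\<lambda>x. \<Sum>m\<in>M. c m * cos (2 * pi * of_int (q m) * x))"
    by (subst integral_sum)
      (auto simp: assms(1) integral_cos_2pi_int
        intro!: integrable_continuous_interval continuous_intros)
  finally show ?thesis .
qed

lemma sin_power_even_cos_expansion:
  "sin \<theta> ^ (2 * j) = (\<Sum>m\<le>2 * j.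
     real (2 * j choose m) * (-1) ^ (2 * j - m) / (-4) ^ j * cos (2 * of_int (int m - int j) * \<theta>))"
proof -
  have sin_cis: "complex_of_real (sin \<theta>) = (cis \<theta> + - cis (-\<theta>)) / (2 * \<i>)"
    by (simp add: complex_eq_iff)
  have binomial_term: "cis \<theta> ^ m * (- cis (-\<theta>)) ^ (2 * j - m)
      = (-1) ^ (2 * j - m) * cis (2 * of_int (int m - int j) * \<theta>)" if "m \<le> 2 * j" for m
  proof -
    have "cis \<theta> ^ m * (- cis (-\<theta>)) ^ (2 * j - m)
        = (-1) ^ (2 * j - m) * (cis (real m * \<theta>) * cis (real (2 * j - m) * (-\<theta>)))"
      by (subst power_minus, simp only: Complex.DeMoivre mult_minus_right, simp add: ac_simps)
    also have "cis (real m * \<theta>) * cis (real (2 * j - m) * (-\<theta>))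
        = cis (2 * of_int (int m - int j) * \<theta>)"
      using that by (simp only: cis_mult, simp add: of_nat_diff algebra_simps)
    finally show ?thesis .
  qed
  have "sin \<theta> ^ (2 * j) = Re (complex_of_real (sin \<theta> ^ (2 * j)))"
    by simp
  also have "complex_of_real (sin \<theta> ^ (2 * j)) = (cis \<theta> + - cis (-\<theta>)) ^ (2 * j) / (-4) ^ j"
    by (simp only: of_real_power sin_cis power_divide) (simp add: power_mult)
  also have "\<dots> = (\<Sum>m\<le>2 * j. of_nat (2 * j choose m)
      * ((-1) ^ (2 * j - m) * cis (2 * of_int (int m - int j) * \<theta>))) / (-4) ^ j"
    unfolding binomial_ring
    by (intro arg_cong[where f="\<lambda>z. z / (-4) ^ j"] sum.cong refl)
      (simp add: binomial_term mult.assoc)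
  finally show ?thesis
    by (simp add: Re_sum sum_divide_distrib mult.assoc)
qed

lemma riemann_sum_sin_power_even:
  assumes "j < n"
  shows "(\<Sum>k<n. sin (pi * (real k / real n)) ^ (2 * j))
    = real n * integral {0..1} (\<lambda>x. sin (pi * x) ^ (2 * j))"
proof -
  define c where "c m = real (2 * j choose m) * (-1) ^ (2 * j - m) / (-4) ^ j" for m
  have expand: "sin (pi * x) ^ (2 * j)
      = (\<Sum>m\<le>2 * j. c m * cos (2 * pi * of_int (int m - int j) * x))" for x
    unfolding c_def sin_power_even_cos_expansion by (simp add: mult_ac)
  show ?thesis
    unfolding expand using assms by (intro riemann_sum_cos_poly) auto
qed

section \<open>Grid sums and integrals over the unit square\<close>

definition grid_sum :: "nat \<Rightarrow> (real \<Rightarrow> real \<Rightarrow> real) \<Rightarrow> real" where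
  "grid_sum n f = (\<Sum>k1<n. \<Sum>k2<n. f (real k1 / real n) (real k2 / real n))"

definition square_integral :: "(real \<Rightarrow> real \<Rightarrow> real) \<Rightarrow> real" where
  "square_integral f = integral {0..1} (\<lambda>x. integral {0..1} (f x))"

definition grid_exact :: "nat \<Rightarrow> (real \<Rightarrow> real \<Rightarrow> real) \<Rightarrow> bool" where
  "grid_exact n f \<longleftrightarrow> grid_sum n f = (real n)\<^sup>2 * square_integral f"

lemma continuous_on_square_slice:
  fixes f :: "real \<Rightarrow> real \<Rightarrow> real"
  assumes "continuous_on ({0..1} \<times> {0..1}) (\<lambda>(x, y). f x y)" "x \<in> {0..1}"
  shows "continuous_on {0..1} (f x)"
proof -
  have "continuous_on {0..1} (\<lambda>y. (\<lambda>(x, y). f x y) (x, y))"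
    by (rule continuous_on_compose2[OF assms(1)])
      (use assms(2) in \<open>auto intro!: continuous_intros\<close>)
  then show ?thesis
    by simp
qed

lemma continuous_on_square_inner_integral:
  fixes f :: "real \<Rightarrow> real \<Rightarrow> real"
  assumes "continuous_on ({0..1} \<times> {0..1}) (\<lambda>(x, y). f x y)"
  shows "continuous_on {0..1} (\<lambda>x. integral {0..1} (f x))"
  using integral_continuous_on_param[of "{0..1}" 0 1 f] assms by (simp add: cbox_interval)

lemma continuous_on_square_integral_param:
  fixes f :: "'a::topological_space \<Rightarrow> real \<Rightarrow> real \<Rightarrow> real"
  assumes "continuous_on ((T \<times> {0..1}) \<times> {0..1}) (\<lambda>((t, x), y). f t x y)"
  shows "continuous_on T (\<lambda>t. square_integral (f t))"
proof -
  have "continuous_on (T \<times> {0..1}) (\<lambda>(t, x). integral (cbox 0 1) (f t x))"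
    using integral_continuous_on_param[of "T \<times> {0..1}" 0 1 "\<lambda>(t, x). f t x"] assms
    by (simp add: case_prod_beta' split_beta')
  then show ?thesis
    using integral_continuous_on_param[of T 0 1 "\<lambda>t x. integral (cbox 0 1) (f t x)"]
    unfolding square_integral_def by (simp add: cbox_interval case_prod_beta')
qed

lemma square_integral_sum:
  fixes g :: "'a \<Rightarrow> real \<Rightarrow> real \<Rightarrow> real"
  assumes "finite J" "\<And>j. j \<in> J \<Longrightarrow> continuous_on ({0..1} \<times> {0..1}) (\<lambda>(x, y). g j x y)"
  shows "square_integral (\<lambda>x y. \<Sum>j\<in>J. g j x y) = (\<Sum>j\<in>J. square_integral (g j))"
proof -
  have "square_integral (\<lambda>x y. \<Sum>j\<in>J. g j x y)
      = integral {0..1} (\<lambda>x. \<Sum>j\<in>J. integral {0..1} (g j x))"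
    unfolding square_integral_def using assms
    by (intro integral_cong integral_sum)
      (auto intro!: integrable_continuous_interval continuous_on_square_slice)
  also have "\<dots> = (\<Sum>j\<in>J. square_integral (g j))"
    unfolding square_integral_def using assms
    by (intro integral_sum integrable_continuous_interval continuous_on_square_inner_integral) auto
  finally show ?thesis .
qed

lemma square_integral_diff:
  fixes f g :: "real \<Rightarrow> real \<Rightarrow> real"
  assumes "continuous_on ({0..1} \<times> {0..1}) (\<lambda>(x, y). f x y)"
    and "continuous_on ({0..1} \<times> {0..1}) (\<lambda>(x, y). g x y)"
  shows "square_integral (\<lambda>x y. f x y - g x y) = square_integral f - square_integral g"
proof -
  have "square_integral (\<lambda>x y. f x y - g x y)
      = integral {0..1} (\<lambda>x. integral {0..1} (f x) - integral {0..1} (g x))"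
    unfolding square_integral_def using assms
    by (intro integral_cong integral_diff)
      (auto intro!: integrable_continuous_interval continuous_on_square_slice)
  also have "\<dots> = square_integral f - square_integral g"
    unfolding square_integral_def using assms
    by (intro integral_diff integrable_continuous_interval continuous_on_square_inner_integral)
  finally show ?thesis .
qed

lemma square_integral_mult:
  "square_integral (\<lambda>x y. f x * g y) = integral {0..1} f * integral {0..1} g"
  unfolding square_integral_def by simp

lemma square_integral_cmult:
  "square_integral (\<lambda>x y. c * f x y) = c * square_integral f"
  unfolding square_integral_def by simp

lemma abs_square_integral_le:
  fixes f :: "real \<Rightarrow> real \<Rightarrow> real"
  assumes "continuous_on ({0..1} \<times> {0..1}) (\<lambda>(x, y). f x y)"
    and "\<And>x y. x \<in> {0..1} \<Longrightarrow> y \<in> {0..1} \<Longrightarrow> \<bar>f x y\<bar> \<le> e"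
  shows "\<bar>square_integral f\<bar> \<le> e"
proof -
  have inner: "norm (integral {0..1} (f x)) \<le> e" if "x \<in> {0..1}" for x
    using integral_bound[of 0 1 "f x" e] assms that continuous_on_square_slice by simp
  show ?thesis
    using integral_bound[of 0 1 "\<lambda>x. integral {0..1} (f x)" e] inner
      continuous_on_square_inner_integral[OF assms(1)]
    unfolding square_integral_def by simp
qed

lemma grid_sum_mult:
  "grid_sum n (\<lambda>x y. f x * g y) = (\<Sum>k<n. f (real k / real n)) * (\<Sum>k<n. g (real k / real n))"
  unfolding grid_sum_def by (simp add: sum_product)

lemma grid_sum_diff:
  "grid_sum n (\<lambda>x y. f x y - g x y) = grid_sum n f - grid_sum n g"
  unfolding grid_sum_def by (simp add: sum_subtractf)

lemma abs_grid_sum_le: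
  assumes "\<And>x y. x \<in> {0..1} \<Longrightarrow> y \<in> {0..1} \<Longrightarrow> \<bar>f x y\<bar> \<le> e"
  shows "\<bar>grid_sum n f\<bar> \<le> (real n)\<^sup>2 * e"
proof -
  have "\<bar>f (real k1 / real n) (real k2 / real n)\<bar> \<le> e" if "k1 < n" "k2 < n" for k1 k2
    using that by (intro assms) (auto simp: divide_le_eq_1)
  then have "\<bar>grid_sum n f\<bar> \<le> (\<Sum>k1<n. \<Sum>k2<n. e)"
    unfolding grid_sum_def by (intro order.trans[OF sum_abs] sum_mono order.trans[OF sum_abs]) auto
  then show ?thesis
    by (simp add: power2_eq_square)
qed

lemma grid_exact_product:
  assumes "(\<Sum>k<n. f (real k / real n)) = real n * integral {0..1} f"
    and "(\<Sum>k<n. g (real k / real n)) = real n * integral {0..1} g"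
  shows "grid_exact n (\<lambda>x y. f x * g y)"
  unfolding grid_exact_def grid_sum_mult square_integral_mult assms by (simp add: power2_eq_square)

lemma grid_exact_sum:
  fixes g :: "'a \<Rightarrow> real \<Rightarrow> real \<Rightarrow> real"
  assumes "finite J" "\<And>j. j \<in> J \<Longrightarrow> continuous_on ({0..1} \<times> {0..1}) (\<lambda>(x, y). g j x y)"
    and "\<And>j. j \<in> J \<Longrightarrow> grid_exact n (g j)"
  shows "grid_exact n (\<lambda>x y. \<Sum>j\<in>J. c j * g j x y)"
proof -
  have "grid_sum n (\<lambda>x y. \<Sum>j\<in>J. c j * g j x y) = (\<Sum>j\<in>J. c j * grid_sum n (g j))"
    unfolding grid_sum_def by (simp add: sum_distrib_left sum.swap[of _ J])
  also have "\<dots> = (real n)\<^sup>2 * (\<Sum>j\<in>J. square_integral (\<lambda>x y. c j * g j x y))"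
    using assms(3) by (simp add: grid_exact_def square_integral_cmult sum_distrib_left mult_ac)
  also have "(\<Sum>j\<in>J. square_integral (\<lambda>x y. c j * g j x y))
      = square_integral (\<lambda>x y. \<Sum>j\<in>J. c j * g j x y)"
    using assms(1,2) by (intro square_integral_sum[symmetric])
      (auto simp: case_prod_beta intro!: continuous_intros)
  finally show ?thesis
    unfolding grid_exact_def .
qed

lemma grid_sum_error_le:
  fixes f p :: "real \<Rightarrow> real \<Rightarrow> real"
  assumes cont_f: "continuous_on ({0..1} \<times> {0..1}) (\<lambda>(x, y). f x y)"
    and cont_p: "continuous_on ({0..1} \<times> {0..1}) (\<lambda>(x, y). p x y)"
    and exact: "grid_exact n p"
    and approx: "\<And>x y. x \<in> {0..1} \<Longrightarrow> y \<in> {0..1} \<Longrightarrow> \<bar>f x y - p x y\<bar> \<le> e"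
  shows "\<bar>grid_sum n f - (real n)\<^sup>2 * square_integral f\<bar> \<le> 2 * (real n)\<^sup>2 * e"
proof -
  let ?d = "\<lambda>x y. f x y - p x y"
  have cont_d: "continuous_on ({0..1} \<times> {0..1}) (\<lambda>(x, y). ?d x y)"
    using cont_f cont_p by (simp add: case_prod_beta continuous_on_diff)
  have "grid_sum n f - (real n)\<^sup>2 * square_integral f
      = grid_sum n ?d - (real n)\<^sup>2 * square_integral ?d"
    using exact cont_f cont_p
    by (simp add: grid_sum_diff square_integral_diff grid_exact_def algebra_simps)
  also have "\<bar>\<dots>\<bar> \<le> \<bar>grid_sum n ?d\<bar> + (real n)\<^sup>2 * \<bar>square_integral ?d\<bar>"
    using abs_triangle_ineq4[of "grid_sum n ?d" "(real n)\<^sup>2 * square_integral ?d"]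
    by (simp add: abs_mult)
  also have "\<dots> \<le> (real n)\<^sup>2 * e + (real n)\<^sup>2 * e"
    using approx cont_d
    by (intro add_mono mult_left_mono abs_grid_sum_le abs_square_integral_le) auto
  finally show ?thesis
    by (simp add: mult_ac)
qed

section \<open>The rescaled symbol and resolvent kernel\<close>

definition sin_sq_pi :: "real \<Rightarrow> real" where
  "sin_sq_pi x = (sin (pi * x))\<^sup>2 / pi\<^sup>2"

definition lap_symbol :: "real \<Rightarrow> real \<Rightarrow> real" where
  "lap_symbol x y = sin_sq_pi x + sin_sq_pi y"

lemma continuous_on_sin_sq_pi [continuous_intros]:
  fixes g :: "'a::metric_space \<Rightarrow> real"
  shows "continuous_on S g \<Longrightarrow> continuous_on S (\<lambda>x. sin_sq_pi (g x))"
  unfolding sin_sq_pi_def by (auto intro!: continuous_intros)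

lemma continuous_on_lap_symbol [continuous_intros]:
  fixes g h :: "'a::metric_space \<Rightarrow> real"
  shows "continuous_on S g \<Longrightarrow> continuous_on S h \<Longrightarrow> continuous_on S (\<lambda>p. lap_symbol (g p) (h p))"
  unfolding lap_symbol_def by (intro continuous_intros)

lemma sin_sq_pi_bounds: "0 \<le> sin_sq_pi x" "sin_sq_pi x \<le> 1 / 8"
proof -
  have "3 * 3 < pi * pi"
    using pi_gt3 by (intro mult_strict_mono) auto
  then have "8 \<le> pi\<^sup>2"
    by (simp add: power2_eq_square)
  moreover have "(sin (pi * x))\<^sup>2 \<le> 1"
    by (simp add: abs_square_le_1)
  ultimately show "0 \<le> sin_sq_pi x" "sin_sq_pi x \<le> 1 / 8"
    unfolding sin_sq_pi_def by (auto simp: divide_le_eq)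
qed

lemma lap_symbol_bounds: "0 \<le> lap_symbol x y" "lap_symbol x y \<le> 1 / 4"
  unfolding lap_symbol_def using sin_sq_pi_bounds[of x] sin_sq_pi_bounds[of y] by auto

lemma riemann_sum_sin_sq_pi_power:
  assumes "a < n"
  shows "(\<Sum>k<n. sin_sq_pi (real k / real n) ^ a) = real n * integral {0..1} (\<lambda>x. sin_sq_pi x ^ a)"
proof -
  have power: "sin_sq_pi x ^ a = sin (pi * x) ^ (2 * a) / pi ^ (2 * a)" for x
    unfolding sin_sq_pi_def by (simp add: power_divide power_mult)
  show ?thesis
    unfolding power using riemann_sum_sin_power_even[OF assms]
    by (simp add: sum_divide_distrib[symmetric])
qed

lemma grid_exact_lap_symbol_power:
  assumes "j < n"
  shows "grid_exact n (\<lambda>x y. lap_symbol x y ^ j)"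
proof -
  have "grid_exact n (\<lambda>x y. \<Sum>a\<le>j. real (j choose a) * (sin_sq_pi x ^ a * sin_sq_pi y ^ (j - a)))"
    using assms by (intro grid_exact_sum grid_exact_product riemann_sum_sin_sq_pi_power)
      (auto simp: case_prod_beta intro!: continuous_intros)
  then show ?thesis
    unfolding lap_symbol_def binomial_ring by (simp add: mult.assoc)
qed

definition res_kernel :: "real \<Rightarrow> real \<Rightarrow> real \<Rightarrow> real" where
  "res_kernel t x y = 1 / (lap_symbol x y + t\<^sup>2)\<^sup>2"

text \<open>The expansion (w + t^2)^-2 = t^-4 sum_j (j + 1) (-w/t^2)^j in powers of w = lap_symbol x y,
  truncated after n terms.\<close>

definition res_kernel_taylor :: "nat \<Rightarrow> real \<Rightarrow> real \<Rightarrow> real \<Rightarrow> real" where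
  "res_kernel_taylor n t x y = (\<Sum>j<n. real (j + 1) * (-1 / t\<^sup>2) ^ j / t ^ 4 * lap_symbol x y ^ j)"

lemma continuous_on_res_kernel [continuous_intros]:
  fixes f g h :: "'a::metric_space \<Rightarrow> real"
  assumes "continuous_on S f" "continuous_on S g" "continuous_on S h" "\<And>p. p \<in> S \<Longrightarrow> f p \<noteq> 0"
  shows "continuous_on S (\<lambda>p. res_kernel (f p) (g p) (h p))"
proof -
  have "lap_symbol (g p) (h p) + (f p)\<^sup>2 \<noteq> 0" if "p \<in> S" for p
    using lap_symbol_bounds[of "g p" "h p"] assms(4)[OF that] by (simp add: add_nonneg_eq_0_iff)
  then show ?thesis
    unfolding res_kernel_def using assms by (intro continuous_intros) auto
qed

lemma res_kernel_bounds:
  assumes "t \<noteq> 0"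
  shows "0 \<le> res_kernel t x y" "res_kernel t x y \<le> 1 / t ^ 4"
proof -
  have "(t\<^sup>2)\<^sup>2 \<le> (lap_symbol x y + t\<^sup>2)\<^sup>2"
    using lap_symbol_bounds[of x y] by (intro power_mono) auto
  then show "0 \<le> res_kernel t x y" "res_kernel t x y \<le> 1 / t ^ 4"
    unfolding res_kernel_def using assms by (auto simp: frac_le simp flip: power_mult)
qed

lemma sum_Suc_mult_power_closed_form:
  fixes x :: "'a::comm_ring_1"
  shows "(1 - x)\<^sup>2 * (\<Sum>j<M. of_nat (j + 1) * x ^ j)
    = 1 - of_nat (M + 1) * x ^ M + of_nat M * x ^ (M + 1)"
  by (induction M) (simp_all add: algebra_simps power2_eq_square)

lemma inverse_square_taylor_error:
  fixes r :: real
  assumes "0 \<le> r" "r \<le> 1"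
  shows "\<bar>1 / (1 + r)\<^sup>2 - (\<Sum>j<M. real (j + 1) * (-r) ^ j)\<bar> \<le> real (2 * M + 1) * r ^ M"
proof -
  have pos: "1 \<le> (1 + r)\<^sup>2"
    using assms by (simp add: one_le_power)
  define S where "S = (\<Sum>j<M. real (j + 1) * (-r) ^ j)"
  have "(1 + r)\<^sup>2 * S = 1 - real (M + 1) * (-r) ^ M + real M * (-r) ^ (M + 1)"
    using sum_Suc_mult_power_closed_form[of "-r" M] unfolding S_def by simp
  then have "S = (1 - real (M + 1) * (-r) ^ M + real M * (-r) ^ (M + 1)) / (1 + r)\<^sup>2"
    using pos assms(1) by (simp add: eq_divide_eq mult.commute)
  then have "1 / (1 + r)\<^sup>2 - S = (real (M + 1) * (-r) ^ M - real M * (-r) ^ (M + 1)) / (1 + r)\<^sup>2"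
    by (simp add: diff_divide_distrib add_divide_distrib)
  then have "\<bar>1 / (1 + r)\<^sup>2 - S\<bar> \<le> \<bar>real (M + 1) * (-r) ^ M - real M * (-r) ^ (M + 1)\<bar>"
    using pos by (simp add: abs_divide divide_le_eq mult_le_cancel_left1)
  also have "\<dots> \<le> real (M + 1) * r ^ M + real M * r ^ (M + 1)"
    using assms abs_triangle_ineq4[of "real (M + 1) * (-r) ^ M" "real M * (-r) ^ (M + 1)"]
    by (simp add: abs_mult power_abs)
  also have "\<dots> \<le> real (2 * M + 1) * r ^ M"
    using assms mult_left_mono[OF power_decreasing[of M "M + 1" r], of "real M"]
    by (simp add: algebra_simps)
  finally show ?thesis
    unfolding S_def .
qed

lemma res_kernel_taylor_error:
  assumes "1 \<le> t"
  shows "\<bar>res_kernel t x y - res_kernel_taylor n t x y\<bar> \<le> real (2 * n + 1) * (1 / 4) ^ n / t ^ 4"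
proof -
  define r where "r = lap_symbol x y / t\<^sup>2"
  have t2: "1 \<le> t\<^sup>2"
    using assms by (simp add: one_le_power)
  have r: "0 \<le> r" "r \<le> 1 / 4"
    unfolding r_def using lap_symbol_bounds[of x y] t2
    by (auto simp: divide_le_eq intro: order.trans)
  have "lap_symbol x y + t\<^sup>2 = (1 + r) * t\<^sup>2"
    unfolding r_def using assms by (simp add: field_simps)
  then have kernel: "res_kernel t x y = 1 / (1 + r)\<^sup>2 / t ^ 4"
    unfolding res_kernel_def by (simp add: power_mult_distrib flip: power_mult)
  have taylor: "res_kernel_taylor n t x y = (\<Sum>j<n. real (j + 1) * (-r) ^ j) / t ^ 4"
  proof -
    have "-r = (-1 / t\<^sup>2) * lap_symbol x y"
      unfolding r_def by simp
    then have "(-r) ^ j = (-1 / t\<^sup>2) ^ j * lap_symbol x y ^ j" for j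
      by (simp only: power_mult_distrib)
    then show ?thesis
      unfolding res_kernel_taylor_def sum_divide_distrib by (simp add: mult_ac)
  qed
  have "\<bar>res_kernel t x y - res_kernel_taylor n t x y\<bar>
      = \<bar>1 / (1 + r)\<^sup>2 - (\<Sum>j<n. real (j + 1) * (-r) ^ j)\<bar> / t ^ 4"
    unfolding kernel taylor diff_divide_distrib[symmetric] abs_divide by simp
  also have "\<dots> \<le> real (2 * n + 1) * r ^ n / t ^ 4"
    using inverse_square_taylor_error[of r n] r by (intro divide_right_mono) auto
  also have "\<dots> \<le> real (2 * n + 1) * (1 / 4) ^ n / t ^ 4"
    using r by (intro divide_right_mono mult_left_mono power_mono) auto
  finally show ?thesis .
qed

lemma grid_sum_res_kernel_error:
  assumes "1 \<le> t"
  shows "\<bar>grid_sum n (res_kernel t) - (real n)\<^sup>2 * square_integral (res_kernel t)\<bar>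
    \<le> 2 * (real n)\<^sup>2 * (real (2 * n + 1) * (1 / 4) ^ n / t ^ 4)"
proof (rule grid_sum_error_le[where p = "res_kernel_taylor n t"])
  show "grid_exact n (res_kernel_taylor n t)"
    unfolding res_kernel_taylor_def
    by (intro grid_exact_sum grid_exact_lap_symbol_power)
      (auto simp: case_prod_beta intro!: continuous_intros)
  show "continuous_on ({0..1} \<times> {0..1}) (\<lambda>(x, y). res_kernel t x y)"
    using assms by (auto simp: case_prod_beta intro!: continuous_intros)
  show "continuous_on ({0..1} \<times> {0..1}) (\<lambda>(x, y). res_kernel_taylor n t x y)"
    unfolding res_kernel_taylor_def using assms
    by (auto simp: case_prod_beta intro!: continuous_intros)
qed (rule res_kernel_taylor_error[OF assms])

lemma continuous_on_grid_sum_res_kernel: "continuous_on {1..} (\<lambda>t. grid_sum n (res_kernel t))"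
  unfolding grid_sum_def by (intro continuous_intros) auto

lemma continuous_on_square_integral_res_kernel:
  "continuous_on {1..} (\<lambda>t. square_integral (res_kernel t))"
  by (intro continuous_on_square_integral_param)
    (auto simp: case_prod_beta intro!: continuous_intros)

lemma abs_grid_sum_res_kernel_le:
  "t \<noteq> 0 \<Longrightarrow> \<bar>grid_sum n (res_kernel t)\<bar> \<le> (real n)\<^sup>2 / t ^ 4"
  using abs_grid_sum_le[of "res_kernel t" "1 / t ^ 4" n] res_kernel_bounds by simp

lemma abs_square_integral_res_kernel_le:
  "t \<noteq> 0 \<Longrightarrow> \<bar>square_integral (res_kernel t)\<bar> \<le> 1 / t ^ 4"
  using res_kernel_bounds
  by (intro abs_square_integral_le) (auto simp: case_prod_beta intro!: continuous_intros)

section \<open>Integrals against the weight t powr (3 - 2s) on [1, \<infinity>)\<close>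

definition tail_integral :: "complex \<Rightarrow> (real \<Rightarrow> real) \<Rightarrow> complex" where
  "tail_integral s f =
     integral {1..} (\<lambda>t. complex_of_real t powr (3 - 2 * s) * complex_of_real (f t))"

lemma absolutely_integrable_on_atLeast_powr_bound:
  fixes g :: "real \<Rightarrow> 'a::euclidean_space"
  assumes "continuous_on {a..} g" "0 < a" "e < -1"
    and "\<And>t. a \<le> t \<Longrightarrow> norm (g t) \<le> C * t powr e"
  shows "g absolutely_integrable_on {a..}"
proof (rule measurable_bounded_by_integrable_imp_absolutely_integrable)
  show "{a..} \<in> sets lebesgue"
    by simp
  show "g \<in> borel_measurable (lebesgue_on {a..})"
    using assms(1) by (intro continuous_imp_measurable_on_sets_lebesgue) auto
  show "(\<lambda>t. C * t powr e) integrable_on {a..}"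
    using has_integral_mult_right[OF has_integral_powr_to_inf[OF assms(3,2)], of C]
    unfolding integrable_on_def by blast
qed (use assms(4) in auto)

lemma norm_powr_weight_le:
  fixes s :: complex
  assumes "1 \<le> t" "\<bar>y\<bar> \<le> C / t ^ 4"
  shows "norm (complex_of_real t powr (3 - 2 * s) * complex_of_real y) \<le> C * t powr (-1 - 2 * Re s)"
proof -
  have "norm (complex_of_real t powr (3 - 2 * s) * complex_of_real y) = t powr (3 - 2 * Re s) * \<bar>y\<bar>"
    using assms(1) by (simp add: norm_mult norm_powr_real_powr)
  also have "\<dots> \<le> t powr (3 - 2 * Re s) * (C / t powr 4)"
    using assms by (intro mult_left_mono) auto
  also have "\<dots> = C * t powr (-1 - 2 * Re s)"
    using assms(1) powr_add[of t "-1 - 2 * Re s" 4] by simp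
  finally show ?thesis .
qed

lemma powr_weight_absolutely_integrable:
  fixes s :: complex
  assumes "0 < Re s" "continuous_on {1..} f" "\<And>t. 1 \<le> t \<Longrightarrow> \<bar>f t\<bar> \<le> C / t ^ 4"
  shows "(\<lambda>t. complex_of_real t powr (3 - 2 * s) * complex_of_real (f t))
    absolutely_integrable_on {1..}"
  using assms
  by (intro absolutely_integrable_on_atLeast_powr_bound[where e = "-1 - 2 * Re s"]
      norm_powr_weight_le)
    (auto intro!: continuous_intros)

lemma norm_tail_integral_le:
  fixes s :: complex
  assumes "0 < Re s" "continuous_on {1..} f" "\<And>t. 1 \<le> t \<Longrightarrow> \<bar>f t\<bar> \<le> C / t ^ 4"
  shows "norm (tail_integral s f) \<le> C / (2 * Re s)"
proof -
  have majorant: "((\<lambda>t. C * t powr (-1 - 2 * Re s)) has_integral C / (2 * Re s)) {1..}"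
    using has_integral_mult_right[OF has_integral_powr_to_inf[of "-1 - 2 * Re s" 1], of C] assms(1)
    by simp
  have "norm (tail_integral s f) \<le> integral {1..} (\<lambda>t. C * t powr (-1 - 2 * Re s))"
    unfolding tail_integral_def
    using majorant assms(3) powr_weight_absolutely_integrable[OF assms]
    by (intro integral_norm_bound_integral)
      (auto simp: norm_powr_weight_le integrable_on_def intro: set_lebesgue_integral_eq_integral(1))
  then show ?thesis
    using integral_unique[OF majorant] by simp
qed

lemma tail_integral_diff:
  fixes s :: complex
  assumes "0 < Re s" "continuous_on {1..} f" "continuous_on {1..} g"
    and "\<And>t. 1 \<le> t \<Longrightarrow> \<bar>f t\<bar> \<le> C / t ^ 4" "\<And>t. 1 \<le> t \<Longrightarrow> \<bar>g t\<bar> \<le> C / t ^ 4"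
  shows "tail_integral s (\<lambda>t. f t - g t) = tail_integral s f - tail_integral s g"
  unfolding tail_integral_def of_real_diff right_diff_distrib using assms
  by (intro integral_diff set_lebesgue_integral_eq_integral(1) powr_weight_absolutely_integrable)
    auto

lemma tail_integral_cmult: "tail_integral s (\<lambda>t. c * f t) = complex_of_real c * tail_integral s f"
  unfolding tail_integral_def integral_mult_right[symmetric] by (simp add: mult_ac)

lemma integral_atLeast_rescale:
  fixes f :: "real \<Rightarrow> 'a::euclidean_space"
  assumes "0 < c" and "(\<lambda>t. f (c * t)) absolutely_integrable_on {1..}"
  shows "integral {c..} f = c *\<^sub>R integral {1..} (\<lambda>t. f (c * t))"
proof -
  define h where "h y = indicator {c..} y *\<^sub>R f y" for y
  have h_scaled: "h (0 + c * t) = indicator {1..} t *\<^sub>R f (c * t)" for t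
    using assms(1) unfolding h_def indicator_def by auto
  have "set_integrable lebesgue {c..} f"
    using assms lebesgue_integrable_real_affine_iff[of c h 0]
    unfolding set_integrable_def h_scaled[symmetric] h_def by simp
  then have "integral {c..} f = (\<integral>t. h t \<partial>lebesgue)"
    using set_lebesgue_integral_eq_integral(2) unfolding set_lebesgue_integral_def h_def by metis
  also have "\<dots> = \<bar>c\<bar> *\<^sub>R (\<integral>t. h (0 + c * t) \<partial>lebesgue)"
    using assms(1) by (intro lebesgue_integral_real_affine) simp
  also have "(\<integral>t. h (0 + c * t) \<partial>lebesgue) = integral {1..} (\<lambda>t. f (c * t))"
    unfolding h_scaled set_lebesgue_integral_def
    by (rule set_lebesgue_integral_eq_integral(2)[OF assms(2), unfolded set_lebesgue_integral_def])
  finally show ?thesis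
    using assms(1) by simp
qed

lemma lap_eigenvalue_eq_lap_symbol:
  "lap_eigenvalue n k1 k2 = (real n)\<^sup>2 * lap_symbol (real k1 / real n) (real k2 / real n)"
  unfolding lap_eigenvalue_def lap_symbol_def sin_sq_pi_def by (simp add: algebra_simps)

lemma tr_res_sq_rescale:
  assumes "0 < n" "t \<noteq> 0"
  shows "tr_res_sq n (real n * t) = grid_sum n (res_kernel t) / real n ^ 4"
proof -
  have "1 / (lap_eigenvalue n k1 k2 + (real n * t)\<^sup>2)\<^sup>2
      = res_kernel t (real k1 / real n) (real k2 / real n) / real n ^ 4" for k1 k2
    unfolding lap_eigenvalue_eq_lap_symbol res_kernel_def
    by (simp add: power_mult_distrib distrib_left[symmetric] flip: power_mult)
  then show ?thesis
    unfolding tr_res_sq_def grid_sum_def by (simp add: sum_divide_distrib)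
qed

lemma a_inf_eq_tail_integral: "a_inf s = tail_integral s (\<lambda>t. square_integral (res_kernel t))"
  unfolding a_inf_def tail_integral_def square_integral_def res_kernel_def lap_symbol_def
    sin_sq_pi_def ..

lemma weighted_tr_res_sq_rescale:
  assumes "0 < n" "0 < t"
  shows "complex_of_real (real n * t) powr z * complex_of_real (tr_res_sq n (real n * t))
    = complex_of_real (real n) powr z / complex_of_real (real n ^ 4)
      * (complex_of_real t powr z * complex_of_real (grid_sum n (res_kernel t)))"
proof -
  have "complex_of_real (real n * t) powr z = complex_of_real (real n) powr z * complex_of_real t powr z"
    unfolding of_real_mult using assms by (intro powr_times_real) auto
  moreover have "tr_res_sq n (real n * t) = grid_sum n (res_kernel t) / real n ^ 4"
    using assms by (intro tr_res_sq_rescale) auto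
  ultimately show ?thesis
    by (simp add: field_simps)
qed

lemma J_inf_rescale:
  assumes "0 < n" "0 < Re s"
  shows "J_inf n s = of_nat n powr (-2 * s) * tail_integral s (\<lambda>t. grid_sum n (res_kernel t))"
proof -
  let ?g = "\<lambda>t. complex_of_real t powr (3 - 2 * s) * complex_of_real (grid_sum n (res_kernel t))"
  let ?f = "\<lambda>z. complex_of_real z powr (3 - 2 * s) * complex_of_real (tr_res_sq n z)"
  define K where "K = complex_of_real (real n) powr (3 - 2 * s) / complex_of_real (real n ^ 4)"
  have scaled: "?f (real n * t) = K * ?g t" if "1 \<le> t" for t
    unfolding K_def using assms(1) that by (intro weighted_tr_res_sq_rescale) auto
  have "?g absolutely_integrable_on {1..}"
    using assms(2) abs_grid_sum_res_kernel_le continuous_on_grid_sum_res_kernel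
    by (intro powr_weight_absolutely_integrable[where C = "(real n)\<^sup>2"]) auto
  then have "(\<lambda>t. K * ?g t) absolutely_integrable_on {1..}"
    by simp
  then have "(\<lambda>t. ?f (real n * t)) absolutely_integrable_on {1..}"
    using set_integrable_cong[of lebesgue lebesgue "{1..}" "{1..}" "\<lambda>t. ?f (real n * t)"] scaled
    by auto
  then have "J_inf n s = real n *\<^sub>R integral {1..} (\<lambda>t. ?f (real n * t))"
    unfolding J_inf_def using assms(1) by (intro integral_atLeast_rescale) auto
  also have "\<dots> = complex_of_real (real n) * K * tail_integral s (\<lambda>t. grid_sum n (res_kernel t))"
    unfolding tail_integral_def
    using integral_cong[of "{1..}" "\<lambda>t. ?f (real n * t)" "\<lambda>t. K * ?g t"] scaled
    by (simp add: scaleR_conv_of_real mult.assoc)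
  also have "complex_of_real (real n) * K = of_nat n powr (-2 * s)"
  proof -
    have "(of_nat n :: complex) powr (3 - 2 * s) = of_nat n ^ 3 * of_nat n powr (-2 * s)"
      using powr_add[of "of_nat n :: complex" 3 "-2 * s"] by simp
    then show ?thesis
      using assms(1) by (simp add: K_def field_simps power_Suc[symmetric] del: power_Suc)
  qed
  finally show ?thesis .
qed

lemma J_inf_error_le:
  assumes "0 < n" "0 < Re s"
  shows "norm (J_inf n s - a_inf s * of_nat n powr (2 - 2 * s))
    \<le> 2 * (real n)\<^sup>2 * (real (2 * n + 1) * (1 / 4) ^ n) / (2 * Re s)"
proof -
  define G where "G t = grid_sum n (res_kernel t)" for t
  define A where "A t = (real n)\<^sup>2 * square_integral (res_kernel t)" for t
  have cont_G: "continuous_on {1..} G" and cont_A: "continuous_on {1..} A"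
    unfolding G_def A_def
    using continuous_on_grid_sum_res_kernel continuous_on_square_integral_res_kernel
    by (auto intro: continuous_intros)
  have bound_G: "\<bar>G t\<bar> \<le> (real n)\<^sup>2 / t ^ 4" if "1 \<le> t" for t
    using abs_grid_sum_res_kernel_le that unfolding G_def by simp
  have bound_A: "\<bar>A t\<bar> \<le> (real n)\<^sup>2 / t ^ 4" if "1 \<le> t" for t
    using mult_left_mono[OF abs_square_integral_res_kernel_le[of t], of "(real n)\<^sup>2"] that
    by (simp add: A_def abs_mult)
  have "J_inf n s = of_nat n powr (-2 * s) * tail_integral s G"
    unfolding G_def using J_inf_rescale[OF assms] .
  moreover have "a_inf s * of_nat n powr (2 - 2 * s) = of_nat n powr (-2 * s) * tail_integral s A"
  proof -
    have "tail_integral s A = complex_of_real ((real n)\<^sup>2) * a_inf s"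
      unfolding A_def[abs_def] tail_integral_cmult a_inf_eq_tail_integral ..
    then show ?thesis
      using powr_add[of "of_nat n :: complex" 2 "-2 * s"] by simp
  qed
  moreover have "tail_integral s (\<lambda>t. G t - A t) = tail_integral s G - tail_integral s A"
    using assms(2) cont_G cont_A bound_G bound_A by (rule tail_integral_diff)
  ultimately have "J_inf n s - a_inf s * of_nat n powr (2 - 2 * s)
      = of_nat n powr (-2 * s) * tail_integral s (\<lambda>t. G t - A t)"
    by (simp add: right_diff_distrib)
  also have "norm \<dots> \<le> 1 * (2 * (real n)\<^sup>2 * (real (2 * n + 1) * (1 / 4) ^ n) / (2 * Re s))"
    unfolding norm_mult G_def A_def
    using assms grid_sum_res_kernel_error cont_G cont_A powr_mono[of "-(2 * Re s)" 0 "real n"]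
    by (intro mult_mono norm_tail_integral_le)
      (auto simp: G_def A_def norm_powr_real_powr intro!: continuous_intros)
  finally show ?thesis
    by simp
qed

theorem proposition3p3:
  fixes s :: complex and N :: nat
  assumes "Re s > 0"
  shows "(\<lambda>n::nat. J_inf n s - a_inf s * of_nat n powr (2 - 2 * s))
           \<in> O(\<lambda>n. complex_of_real (real n powr (- real N)))"
proof (rule bigoI)
  have "eventually (\<lambda>n::nat.
      2 * (real n)\<^sup>2 * (real (2 * n + 1) * (1 / 4) ^ n) \<le> real n powr (- real N)) at_top"
    by real_asymp
  then show "eventually (\<lambda>n. norm (J_inf n s - a_inf s * of_nat n powr (2 - 2 * s))
      \<le> 1 / (2 * Re s) * norm (complex_of_real (real n powr (- real N)))) at_top"
    using eventually_gt_at_top[of 0]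
  proof eventually_elim
    case (elim n)
    have "norm (J_inf n s - a_inf s * of_nat n powr (2 - 2 * s))
        \<le> 2 * (real n)\<^sup>2 * (real (2 * n + 1) * (1 / 4) ^ n) / (2 * Re s)"
      by (rule J_inf_error_le[OF elim(2) assms])
    also have "\<dots> \<le> real n powr (- real N) / (2 * Re s)"
      using elim(1) assms by (intro divide_right_mono) auto
    finally show ?case
      by simp
  qed
qed

end
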